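(* Each of the logics $\mathbf T$, $\mathbf{KTB}$, $\mathbf{S4}$, $\mathbf{S5}$, $\mathbf{S4.2}$, $\mathbf{S4.3}$ has the strong boxdot property. That is, for each such logic $L_0$ and every normal modal logic $L$, if $\mathrm{BD}(L)\subseteq L_0$ then $L\subseteq L_0$. In particular (the boxdot conjecture), for every normal modal logic $L$: if $\mathrm{BD}(L)=\mathbf T$ then $L\subseteq\mathbf T$.
   Context: Modal formulas are built from propositional variables with Boolean connectives and a single modality $\Box$, with $\Diamond=\neg\Box\neg$. A normal modal logic (nml) contains all tautologies and $\Box(p\to q)\to(\Box p\to\Box q)$, and is closed under modus ponens, necessitation and substitution. $\mathbf K$ is the least nml, and $L\oplus\alpha$ denotes the least nml containing $L\cup\{\alpha\}$. The logics are: - $\mathbf T=\mathbf K\oplus(\Box p\to p)$; - $\mathbf{KTB}=\mathbf T\oplus(p\to\Box\Diamond p)$; - $\mathbf{S4}=\mathbf T\oplus(\Box p\to\Box\Box p)$; - $\mathbf{S5}=\mathbf{S4}\oplus(p\to\Box\Diamond p)$; - $\mathbf{S4.2}=\mathbf{S4}\oplus(\Diamond\Box p\to\Box\Diamond p)$; - $\mathbf{S4.3}=\mathbf{S4}\oplus(\Box(\Box p\to q)\vee\Box(\Box q\to p))$. The boxdot translation $\varphi\mapsto\varphi^{\boxdot}$ fixes propositional variables, commutes with Boolean connectives, and satisfies $(\Box\varphi)^{\boxdot}=\varphi^{\boxdot}\wedge\Box\varphi^{\boxdot}$. For an nml $L$, $\mathrm{BD}(L)=\{\varphi:\varphi^{\boxdot}\in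 L\}$. *)

theory Defs
  imports Main
begin

datatype fm = Var nat | Bot | Imp fm fm | Box fm

definition Neg :: "fm \<Rightarrow> fm" where "Neg a = Imp a Bot"
definition Top :: fm where "Top = Neg Bot"
definition Or :: "fm \<Rightarrow> fm \<Rightarrow> fm" where "Or a b = Imp (Neg a) b"
definition And :: "fm \<Rightarrow> fm \<Rightarrow> fm" where "And a b = Neg (Imp a (Neg b))"
definition Dia :: "fm \<Rightarrow> fm" where "Dia a = Neg (Box (Neg a))"

fun peval :: "(fm \<Rightarrow> bool) \<Rightarrow> fm \<Rightarrow> bool" where
  "peval v (Var n) = v (Var n)"
| "peval v Bot = False"
| "peval v (Imp a b) = (peval v a \<longrightarrow> peval v b)"
| "peval v (Box a) = v (Box a)"

definition tautology :: "fm \<Rightarrow> bool" where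
  "tautology a \<longleftrightarrow> (\<forall>v. peval v a)"

fun subst :: "(nat \<Rightarrow> fm) \<Rightarrow> fm \<Rightarrow> fm" where
  "subst s (Var n) = s n"
| "subst s Bot = Bot"
| "subst s (Imp a b) = Imp (subst s a) (subst s b)"
| "subst s (Box a) = Box (subst s a)"

abbreviation p :: fm where "p \<equiv> Var 0"
abbreviation q :: fm where "q \<equiv> Var 1"

definition nml :: "fm set \<Rightarrow> bool" where
  "nml L \<longleftrightarrow>
     {a. tautology a} \<subseteq> L
   \<and> Imp (Box (Imp p q)) (Imp (Box p) (Box q)) \<in> L
   \<and> (\<forall>a b. a \<in> L \<longrightarrow> Imp a b \<in> L \<longrightarrow> b \<in> L)
   \<and> (\<forall>a. a \<in> L \<longrightarrow> Box a \<in> L)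
   \<and> (\<forall>a s. a \<in> L \<longrightarrow> subst s a \<in> L)"

definition K :: "fm set" where
  "K = \<Inter> {M. nml M}"

definition ext :: "fm set \<Rightarrow> fm \<Rightarrow> fm set" (infixl "\<oplus>" 65) where
  "L \<oplus> \<alpha> = \<Inter> {M. nml M \<and> L \<subseteq> M \<and> \<alpha> \<in> M}"

definition T :: "fm set" where "T = K \<oplus> Imp (Box p) p"
definition KTB :: "fm set" where "KTB = T \<oplus> Imp p (Box (Dia p))"
definition S4 :: "fm set" where "S4 = T \<oplus> Imp (Box p) (Box (Box p))"
definition S5 :: "fm set" where "S5 = S4 \<oplus> Imp p (Box (Dia p))"
definition S4_2 :: "fm set" where "S4_2 = S4 \<oplus> Imp (Dia (Box p)) (Box (Dia p))"
definition S4_3 :: "fm set" where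
  "S4_3 = S4 \<oplus> Or (Box (Imp (Box p) q)) (Box (Imp (Box q) p))"

fun bdot :: "fm \<Rightarrow> fm" where
  "bdot (Var n) = Var n"
| "bdot Bot = Bot"
| "bdot (Imp a b) = Imp (bdot a) (bdot b)"
| "bdot (Box a) = And (bdot a) (Box (bdot a))"

definition BD :: "fm set \<Rightarrow> fm set" where
  "BD L = {a. bdot a \<in> L}"

definition strong_boxdot :: "fm set \<Rightarrow> bool" where
  "strong_boxdot L0 \<longleftrightarrow> (\<forall>L. nml L \<longrightarrow> BD L \<subseteq> L0 \<longrightarrow> L \<subseteq> L0)"

end

theory Submission
  imports Defs
begin

text \<open>Let f \<in> L \<setminus> L0 and pick a variable r not occurring in f. For a boxed subformula
\<box>b of f, the twin guard for b says: wherever b fails, it also fails at a successor of the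
opposite r-colour, hence at a successor distinct from the current point. Let G assert the twin
guards for all boxed subformulas of f at every point reachable within the modal depth of f.
Under G the reflexive box b \<and> \<box>b of the boxdot translation agrees with \<box>b, so bdot a and
a are L-provably equivalent for all subformulas a of f, and G \<rightarrow> f lies in BD(L) \<subseteq> L0.
On the other hand each L0 is valid on its canonical frame doubled to W \<times> {0,1}, with r read
as the second coordinate; the canonical frame being reflexive, every point of the double sees
its twin of the other colour. So G holds everywhere in the doubled canonical countermodel of f
while f fails, and G \<rightarrow> f \<notin> L0.\<close>

abbreviation Imps :: "fm list \<Rightarrow> fm \<Rightarrow> fm" where
  "Imps xs c \<equiv> foldr Imp xs c"

definition Iff :: "fm \<Rightarrow> fm \<Rightarrow> fm" where
  "Iff a b = And (Imp a b) (Imp b a)"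

lemma peval_Neg[simp]: "peval v (Neg a) = (\<not> peval v a)" by (simp add: Neg_def)
lemma peval_Top[simp]: "peval v Top" by (simp add: Top_def)
lemma peval_And[simp]: "peval v (And a b) = (peval v a \<and> peval v b)" by (simp add: And_def)
lemma peval_Iff[simp]: "peval v (Iff a b) = (peval v a = peval v b)" by (auto simp: Iff_def)
lemma peval_Imps[simp]: "peval v (Imps xs c) = ((\<forall>x\<in>set xs. peval v x) \<longrightarrow> peval v c)"
  by (induction xs) auto
lemma peval_Conj: "peval v (foldr And ys Top) = (\<forall>y\<in>set ys. peval v y)"
  by (induction ys) auto

lemma bdot_Neg[simp]: "bdot (Neg a) = Neg (bdot a)" by (simp add: Neg_def)
lemma bdot_And[simp]: "bdot (And a b) = And (bdot a) (bdot b)" by (simp add: And_def)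
lemma bdot_Dia[simp]: "bdot (Dia a) = Neg (And (Neg (bdot a)) (Box (Neg (bdot a))))"
  by (simp add: Dia_def)

lemma subst_Neg[simp]: "subst s (Neg a) = Neg (subst s a)" by (simp add: Neg_def)
lemma subst_Or[simp]: "subst s (Or a b) = Or (subst s a) (subst s b)" by (simp add: Or_def)
lemma subst_Dia[simp]: "subst s (Dia a) = Dia (subst s a)" by (simp add: Dia_def)

lemma nml_taut: "nml L \<Longrightarrow> tautology a \<Longrightarrow> a \<in> L" unfolding nml_def by blast
lemma nml_mp: "nml L \<Longrightarrow> a \<in> L \<Longrightarrow> Imp a b \<in> L \<Longrightarrow> b \<in> L" unfolding nml_def by blast
lemma nml_nec: "nml L \<Longrightarrow> a \<in> L \<Longrightarrow> Box a \<in> L" unfolding nml_def by blast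
lemma nml_subst: "nml L \<Longrightarrow> a \<in> L \<Longrightarrow> subst s a \<in> L" unfolding nml_def by blast

lemma nml_K_axiom:
  assumes "nml L" shows "Imp (Box (Imp a b)) (Imp (Box a) (Box b)) \<in> L"
proof -
  have "Imp (Box (Imp p q)) (Imp (Box p) (Box q)) \<in> L" using assms unfolding nml_def by blast
  from nml_subst[OF assms this, of "\<lambda>n. if n = 0 then a else b"] show ?thesis by simp
qed

lemma nml_Imps_mp:
  assumes "nml L" "set xs \<subseteq> L" "Imps xs c \<in> L" shows "c \<in> L"
  using assms(2,3) by (induction xs) (auto intro: nml_mp[OF assms(1)])

lemma nml_taut_mp:
  assumes "nml L" "set xs \<subseteq> L" "tautology (Imps xs c)" shows "c \<in> L"
  using nml_Imps_mp[OF assms(1,2) nml_taut[OF assms(1,3)]] .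

lemma nml_Imps_Box:
  assumes L: "nml L" shows "Imps xs c \<in> L \<Longrightarrow> Imps (map Box xs) (Box c) \<in> L"
proof (induction xs arbitrary: c)
  case Nil then show ?case using nml_nec[OF L] by simp
next
  case (Cons x xs)
  have "Imps xs (Imp x c) \<in> L"
    by (rule nml_taut_mp[OF L, of "[Imps (x # xs) c]"]) (use Cons.prems in \<open>auto simp: tautology_def\<close>)
  then have "Imps (map Box xs) (Box (Imp x c)) \<in> L" by (rule Cons.IH)
  then show ?case
    by (intro nml_taut_mp[OF L, of "[Imps (map Box xs) (Box (Imp x c)), Imp (Box (Imp x c)) (Imp (Box x) (Box c))]"])
       (auto simp: tautology_def nml_K_axiom[OF L])
qed

lemma nml_Inter: assumes "\<forall>M\<in>S. nml M" shows "nml (\<Inter>S)"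
  unfolding nml_def
proof (intro conjI allI impI subsetI InterI)
  fix a M assume "a \<in> {a. tautology a}" "M \<in> S"
  then show "a \<in> M" using assms nml_taut by auto
next
  fix M assume "M \<in> S"
  then show "Imp (Box (Imp p q)) (Imp (Box p) (Box q)) \<in> M" using assms nml_K_axiom by blast
next
  fix a b M assume "a \<in> \<Inter>S" "Imp a b \<in> \<Inter>S" "M \<in> S"
  then show "b \<in> M" using assms nml_mp[of M a b] by auto
next
  fix a M assume "a \<in> \<Inter>S" "M \<in> S"
  then show "Box a \<in> M" using assms nml_nec[of M a] by auto
next
  fix a s M assume "a \<in> \<Inter>S" "M \<in> S"
  then show "subst s a \<in> M" using assms nml_subst[of M a s] by auto
qed

lemma nml_ext: "nml (L \<oplus> a)" unfolding ext_def by (rule nml_Inter) auto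
lemma ext_subset: "L \<subseteq> L \<oplus> a" unfolding ext_def by auto
lemma ext_axiom: "a \<in> L \<oplus> a" unfolding ext_def by auto
lemma ext_least: "nml M \<Longrightarrow> L \<subseteq> M \<Longrightarrow> a \<in> M \<Longrightarrow> L \<oplus> a \<subseteq> M" unfolding ext_def by auto
lemma K_least: "nml M \<Longrightarrow> K \<subseteq> M" unfolding K_def by auto

section \<open>The boxdot translation under twin guards\<close>

definition twin_guard :: "nat \<Rightarrow> fm \<Rightarrow> fm" where
  "twin_guard r b =
     And (Imp (And (Var r) (Neg b)) (Dia (And (Neg (Var r)) (Neg b))))
         (Imp (And (Neg (Var r)) (Neg b)) (Dia (And (Var r) (Neg b))))"

fun guards :: "nat \<Rightarrow> fm \<Rightarrow> fm" where
  "guards r (Var n) = Top"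
| "guards r Bot = Top"
| "guards r (Imp a b) = And (guards r a) (guards r b)"
| "guards r (Box a) = And (twin_guard r a) (guards r a)"

fun guards_within :: "nat \<Rightarrow> fm \<Rightarrow> nat \<Rightarrow> fm" where
  "guards_within r f 0 = guards r f"
| "guards_within r f (Suc k) = And (guards r f) (Box (guards_within r f k))"

fun box_depth :: "fm \<Rightarrow> nat" where
  "box_depth (Var n) = 0"
| "box_depth Bot = 0"
| "box_depth (Imp a b) = max (box_depth a) (box_depth b)"
| "box_depth (Box a) = Suc (box_depth a)"

fun boxed_subfms :: "fm \<Rightarrow> fm set" where
  "boxed_subfms (Var n) = {}"
| "boxed_subfms Bot = {}"
| "boxed_subfms (Imp a b) = boxed_subfms a \<union> boxed_subfms b"
| "boxed_subfms (Box a) = insert a (boxed_subfms a)"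

definition guarded :: "nat \<Rightarrow> fm \<Rightarrow> fm" where
  "guarded r f = Imp (guards_within r f (box_depth f)) f"

lemma peval_bdot_guards_twin_guard:
  "b \<in> boxed_subfms a \<Longrightarrow> peval v (bdot (guards r a)) \<Longrightarrow> peval v (bdot (twin_guard r b))"
  by (induction a) auto

lemma bdot_Box_equiv_step:
  assumes L: "nml L" and IH: "Imp g (Iff (bdot b) b) \<in> L"
  shows "Imp (And (bdot (twin_guard r b)) (And g (Box g))) (Iff (bdot (Box b)) (Box b)) \<in> L"
proof -
  define b' where "b' = bdot b"
  have boxed: "Imp (Box g) (Imp (Box c) (Box d)) \<in> L"
    if "tautology (Imp (Imp g (Iff b' b)) (Imps [g, c] d))" for c d
  proof -
    have "Imps [g, c] d \<in> L"
      by (rule nml_taut_mp[OF L, of "[Imp g (Iff b' b)]"]) (use IH that in \<open>auto simp: b'_def\<close>)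
    from nml_Imps_Box[OF L this] show ?thesis by simp
  qed
  have no_twin_off: "Imp (Box g) (Imp (Box b) (Box (Neg (And (Neg (Var r)) (Neg b'))))) \<in> L"
    by (rule boxed) (auto simp: tautology_def)
  have no_twin_on: "Imp (Box g) (Imp (Box b) (Box (Neg (And (Var r) (Neg b'))))) \<in> L"
    by (rule boxed) (auto simp: tautology_def)
  have box_bdot: "Imp (Box g) (Imp (Box b) (Box b')) \<in> L" by (rule boxed) (auto simp: tautology_def)
  have box_of_bdot: "Imp (Box g) (Imp (Box b') (Box b)) \<in> L" by (rule boxed) (auto simp: tautology_def)
  \<comment> \<open>If b' failed at a point where \<box>b holds, the twin guard would produce a successor
     where b' fails, which no_twin_off and no_twin_on exclude.\<close>
  show ?thesis
    by (rule nml_taut_mp[OF L, of "[Imp g (Iff b' b),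
          Imp (Box g) (Imp (Box b) (Box (Neg (And (Neg (Var r)) (Neg b'))))),
          Imp (Box g) (Imp (Box b) (Box (Neg (And (Var r) (Neg b'))))),
          Imp (Box g) (Imp (Box b) (Box b')), Imp (Box g) (Imp (Box b') (Box b))]"])
       (use IH no_twin_off no_twin_on box_bdot box_of_bdot in \<open>auto simp: tautology_def twin_guard_def b'_def\<close>)
qed

lemma bdot_equiv_under_guards:
  assumes L: "nml L"
  shows "boxed_subfms a \<subseteq> boxed_subfms f \<Longrightarrow> box_depth a \<le> k \<Longrightarrow>
         Imp (bdot (guards_within r f k)) (Iff (bdot a) a) \<in> L"
proof (induction a arbitrary: k)
  case (Var n) then show ?case by (intro nml_taut[OF L]) (auto simp: tautology_def)
next
  case Bot then show ?case by (intro nml_taut[OF L]) (auto simp: tautology_def)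
next
  case (Imp a1 a2)
  then have "Imp (bdot (guards_within r f k)) (Iff (bdot a1) a1) \<in> L"
    "Imp (bdot (guards_within r f k)) (Iff (bdot a2) a2) \<in> L" by auto
  then show ?case
    by (intro nml_taut_mp[OF L, of "[Imp (bdot (guards_within r f k)) (Iff (bdot a1) a1),
                                     Imp (bdot (guards_within r f k)) (Iff (bdot a2) a2)]"])
       (auto simp: tautology_def)
next
  case (Box b)
  then obtain k' where k: "k = Suc k'" and "box_depth b \<le> k'" by (cases k) auto
  moreover have b: "b \<in> boxed_subfms f" "boxed_subfms b \<subseteq> boxed_subfms f" using Box.prems by auto
  ultimately have step: "Imp (And (bdot (twin_guard r b)) (And (bdot (guards_within r f k'))
                         (Box (bdot (guards_within r f k'))))) (Iff (bdot (Box b)) (Box b)) \<in> L"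
    using bdot_Box_equiv_step[OF L Box.IH] by blast
  have "Imp (bdot (guards r f)) (bdot (twin_guard r b)) \<in> L"
    by (rule nml_taut[OF L]) (auto simp: tautology_def intro: peval_bdot_guards_twin_guard[OF b(1)])
  with step show ?case unfolding k
    by (intro nml_taut_mp[OF L, of "[_, Imp (bdot (guards r f)) (bdot (twin_guard r b))]"])
       (auto simp: tautology_def)
qed

lemma guarded_in_BD: assumes L: "nml L" and f: "f \<in> L" shows "guarded r f \<in> BD L"
proof -
  have "Imp (bdot (guards_within r f (box_depth f))) (Iff (bdot f) f) \<in> L"
    by (rule bdot_equiv_under_guards[OF L]) auto
  then show ?thesis unfolding BD_def guarded_def
    by (intro CollectI nml_taut_mp[OF L, of "[_, f]"]) (use f in \<open>auto simp: tautology_def\<close>)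
qed

section \<open>Kripke semantics\<close>

fun sat :: "('w \<Rightarrow> 'w \<Rightarrow> bool) \<Rightarrow> (nat \<Rightarrow> 'w \<Rightarrow> bool) \<Rightarrow> 'w \<Rightarrow> fm \<Rightarrow> bool" where
  "sat R V w (Var n) = V n w"
| "sat R V w Bot = False"
| "sat R V w (Imp a b) = (sat R V w a \<longrightarrow> sat R V w b)"
| "sat R V w (Box a) = (\<forall>u. R w u \<longrightarrow> sat R V u a)"

definition valid :: "'w set \<Rightarrow> ('w \<Rightarrow> 'w \<Rightarrow> bool) \<Rightarrow> fm \<Rightarrow> bool" where
  "valid W R a \<longleftrightarrow> (\<forall>V. \<forall>w\<in>W. sat R V w a)"

text \<open>Frames are subsets W of a type closed under R, so that the canonical frame needs no new
type.\<close>

definition closed :: "'w set \<Rightarrow> ('w \<Rightarrow> 'w \<Rightarrow> bool) \<Rightarrow> bool" where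
  "closed W R \<longleftrightarrow> (\<forall>x\<in>W. \<forall>y. R x y \<longrightarrow> y \<in> W)"

definition confluent_on :: "'w set \<Rightarrow> ('w \<Rightarrow> 'w \<Rightarrow> bool) \<Rightarrow> bool" where
  "confluent_on W R \<longleftrightarrow> (\<forall>x\<in>W. \<forall>y\<in>W. \<forall>z\<in>W. R x y \<longrightarrow> R x z \<longrightarrow> (\<exists>w\<in>W. R y w \<and> R z w))"

definition connected_on :: "'w set \<Rightarrow> ('w \<Rightarrow> 'w \<Rightarrow> bool) \<Rightarrow> bool" where
  "connected_on W R \<longleftrightarrow> (\<forall>x\<in>W. \<forall>y\<in>W. \<forall>z\<in>W. R x y \<longrightarrow> R x z \<longrightarrow> R y z \<or> R z y)"

lemma sat_Neg[simp]: "sat R V w (Neg a) = (\<not> sat R V w a)" by (simp add: Neg_def)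
lemma sat_And[simp]: "sat R V w (And a b) = (sat R V w a \<and> sat R V w b)" by (simp add: And_def)
lemma sat_Or[simp]: "sat R V w (Or a b) = (sat R V w a \<or> sat R V w b)" by (auto simp: Or_def)
lemma sat_Top[simp]: "sat R V w Top" by (simp add: Top_def)
lemma sat_Dia[simp]: "sat R V w (Dia a) = (\<exists>u. R w u \<and> sat R V u a)" by (simp add: Dia_def)

lemma sat_subst: "sat R V w (subst s a) = sat R (\<lambda>n u. sat R V u (s n)) w a"
  by (induction a arbitrary: w) auto

lemma peval_sat: "peval (sat R V w) a = sat R V w a"
  by (induction a) auto

lemma nml_valid: assumes "closed W R" shows "nml {a. valid W R a}"
  unfolding nml_def
proof (intro conjI allI impI subsetI CollectI)
  fix a assume "a \<in> {a. tautology a}"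
  then show "valid W R a" unfolding valid_def tautology_def by (simp flip: peval_sat)
next
  fix a assume "a \<in> {a. valid W R a}"
  then show "valid W R (Box a)" using assms unfolding closed_def valid_def by simp
qed (simp_all add: valid_def sat_subst)

lemma valid_ext:
  "closed W R \<Longrightarrow> L \<subseteq> {a. valid W R a} \<Longrightarrow> valid W R \<alpha> \<Longrightarrow> L \<oplus> \<alpha> \<subseteq> {a. valid W R a}"
  by (rule ext_least[OF nml_valid]) auto

lemma valid_T_axiom: "reflp_on W R \<Longrightarrow> valid W R (Imp (Box p) p)"
  by (auto simp: valid_def reflp_on_def)

lemma valid_B_axiom:
  assumes "closed W R" "symp_on W R" shows "valid W R (Imp p (Box (Dia p)))"
  unfolding valid_def
proof (intro allI ballI)
  fix V w assume w: "w \<in> W"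
  have "R y w" if "R w y" for y using assms w that unfolding closed_def symp_on_def by blast
  then show "sat R V w (Imp p (Box (Dia p)))" by auto
qed

lemma valid_4_axiom:
  assumes "closed W R" "transp_on W R" shows "valid W R (Imp (Box p) (Box (Box p)))"
  unfolding valid_def
proof (intro allI ballI)
  fix V w assume w: "w \<in> W"
  have "R w z" if "R w y" "R y z" for y z
    using assms w that unfolding closed_def transp_on_def by blast
  then show "sat R V w (Imp (Box p) (Box (Box p)))" by auto
qed

lemma valid_2_axiom:
  assumes "closed W R" "confluent_on W R" shows "valid W R (Imp (Dia (Box p)) (Box (Dia p)))"
  unfolding valid_def
proof (intro allI ballI)
  fix V w assume w: "w \<in> W"
  have "\<exists>u. R y u \<and> R z u" if "R w y" "R w z" for y z
    using assms w that unfolding closed_def confluent_on_def by blast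
  then show "sat R V w (Imp (Dia (Box p)) (Box (Dia p)))" by simp blast
qed

lemma valid_3_axiom:
  assumes "closed W R" "connected_on W R"
  shows "valid W R (Or (Box (Imp (Box p) q)) (Box (Imp (Box q) p)))"
  unfolding valid_def
proof (intro allI ballI)
  fix V w assume w: "w \<in> W"
  have "R y z \<or> R z y" if "R w y" "R w z" for y z
    using assms w that unfolding closed_def connected_on_def by blast
  then show "sat R V w (Or (Box (Imp (Box p) q)) (Box (Imp (Box q) p)))" by simp blast
qed

lemma T_sound: "closed W R \<Longrightarrow> reflp_on W R \<Longrightarrow> T \<subseteq> {a. valid W R a}"
  unfolding T_def by (rule valid_ext[OF _ K_least[OF nml_valid] valid_T_axiom])

lemma KTB_sound: "closed W R \<Longrightarrow> reflp_on W R \<Longrightarrow> symp_on W R \<Longrightarrow> KTB \<subseteq> {a. valid W R a}"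
  unfolding KTB_def by (rule valid_ext[OF _ T_sound valid_B_axiom])

lemma S4_sound: "closed W R \<Longrightarrow> reflp_on W R \<Longrightarrow> transp_on W R \<Longrightarrow> S4 \<subseteq> {a. valid W R a}"
  unfolding S4_def by (rule valid_ext[OF _ T_sound valid_4_axiom])

lemma S5_sound:
  "closed W R \<Longrightarrow> reflp_on W R \<Longrightarrow> transp_on W R \<Longrightarrow> symp_on W R \<Longrightarrow> S5 \<subseteq> {a. valid W R a}"
  unfolding S5_def by (rule valid_ext[OF _ S4_sound valid_B_axiom])

lemma S4_2_sound:
  "closed W R \<Longrightarrow> reflp_on W R \<Longrightarrow> transp_on W R \<Longrightarrow> confluent_on W R \<Longrightarrow> S4_2 \<subseteq> {a. valid W R a}"
  unfolding S4_2_def by (rule valid_ext[OF _ S4_sound valid_2_axiom])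

lemma S4_3_sound:
  "closed W R \<Longrightarrow> reflp_on W R \<Longrightarrow> transp_on W R \<Longrightarrow> connected_on W R \<Longrightarrow> S4_3 \<subseteq> {a. valid W R a}"
  unfolding S4_3_def by (rule valid_ext[OF _ S4_sound valid_3_axiom])

section \<open>The canonical model\<close>

definition consistent :: "fm set \<Rightarrow> fm set \<Rightarrow> bool" where
  "consistent L S \<longleftrightarrow> (\<forall>xs. set xs \<subseteq> S \<longrightarrow> Imps xs Bot \<notin> L)"

definition mcs :: "fm set \<Rightarrow> fm set \<Rightarrow> bool" where
  "mcs L S \<longleftrightarrow> consistent L S \<and> (\<forall>a. a \<notin> S \<longrightarrow> \<not> consistent L (insert a S))"

definition canon_R :: "fm set \<Rightarrow> fm set \<Rightarrow> fm set \<Rightarrow> bool" where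
  "canon_R L S U \<longleftrightarrow> mcs L U \<and> (\<forall>a. Box a \<in> S \<longrightarrow> a \<in> U)"

abbreviation canon_V :: "nat \<Rightarrow> fm set \<Rightarrow> bool" where
  "canon_V n U \<equiv> Var n \<in> U"

lemma lindenbaum:
  assumes "consistent L S0" shows "\<exists>S. S0 \<subseteq> S \<and> mcs L S"
proof -
  let ?A = "{S. S0 \<subseteq> S \<and> consistent L S}"
  have "\<exists>M\<in>?A. \<forall>X\<in>?A. M \<subseteq> X \<longrightarrow> X = M"
  proof (rule subset_Zorn_nonempty)
    show "?A \<noteq> {}" using assms by auto
  next
    fix C assume C: "C \<noteq> {}" "subset.chain ?A C"
    have "consistent L (\<Union>C)"
      unfolding consistent_def
    proof (intro allI impI)
      fix xs assume xs: "set xs \<subseteq> \<Union>C"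
      obtain B where "B \<in> C" "set xs \<subseteq> B"
        using finite_subset_Union_chain[OF _ xs C(1) C(2)] by auto
      then show "Imps xs Bot \<notin> L" using C(2) by (auto simp: subset_chain_def consistent_def)
    qed
    moreover obtain B0 where "B0 \<in> C" using C(1) by blast
    then have "S0 \<subseteq> \<Union>C" using C(2) by (auto simp: subset_chain_def)
    ultimately show "\<Union>C \<in> ?A" by blast
  qed
  then obtain M where M: "S0 \<subseteq> M" "consistent L M" and max: "\<forall>X\<in>?A. M \<subseteq> X \<longrightarrow> X = M"
    by auto
  have "\<not> consistent L (insert a M)" if "a \<notin> M" for a
    using max M(1) that by blast
  then show ?thesis using M unfolding mcs_def by blast
qed

context
  fixes L assumes L: "nml L"
begin

lemma mcs_Imps:
  assumes S: "mcs L S" and "set xs \<subseteq> S" "Imps xs c \<in> L" shows "c \<in> S"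
proof (rule ccontr)
  assume "c \<notin> S"
  then obtain ys where ys: "set ys \<subseteq> insert c S" "Imps ys Bot \<in> L"
    using S by (auto simp: mcs_def consistent_def)
  have "Imps (xs @ filter (\<lambda>y. y \<noteq> c) ys) Bot \<in> L"
    by (rule nml_taut_mp[OF L, of "[Imps xs c, Imps ys Bot]"])
       (use ys assms in \<open>auto simp: tautology_def\<close>)
  moreover have "set (xs @ filter (\<lambda>y. y \<noteq> c) ys) \<subseteq> S" using assms ys by auto
  ultimately show False using S unfolding mcs_def consistent_def by blast
qed

lemma mcs_taut: "mcs L S \<Longrightarrow> set xs \<subseteq> S \<Longrightarrow> tautology (Imps xs c) \<Longrightarrow> c \<in> S"
  using mcs_Imps nml_taut[OF L] by blast

lemma mcs_logic: "mcs L S \<Longrightarrow> a \<in> L \<Longrightarrow> a \<in> S"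
  using mcs_Imps[of S "[]" a] by simp

lemma mcs_Bot: "mcs L S \<Longrightarrow> Bot \<notin> S"
proof
  assume "mcs L S" "Bot \<in> S"
  then have "consistent L S" "set [Bot] \<subseteq> S" by (simp_all add: mcs_def)
  moreover have "Imps [Bot] Bot \<in> L" by (rule nml_taut[OF L]) (simp add: tautology_def)
  ultimately show False unfolding consistent_def by blast
qed

lemma mcs_Neg: assumes S: "mcs L S" shows "Neg a \<in> S \<longleftrightarrow> a \<notin> S"
proof
  assume "Neg a \<in> S"
  then show "a \<notin> S"
    using mcs_Bot[OF S] mcs_taut[OF S, of "[Neg a, a]" Bot] by (auto simp: tautology_def)
next
  assume "a \<notin> S"
  then obtain ys where ys: "set ys \<subseteq> insert a S" "Imps ys Bot \<in> L"
    using S by (auto simp: mcs_def consistent_def)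
  have "Imps (filter (\<lambda>y. y \<noteq> a) ys) (Neg a) \<in> L"
    by (rule nml_taut_mp[OF L, of "[Imps ys Bot]"]) (use ys in \<open>auto simp: tautology_def\<close>)
  then show "Neg a \<in> S" by (rule mcs_Imps[OF S, rotated]) (use ys in auto)
qed

lemma mcs_Imp: assumes S: "mcs L S" shows "Imp a b \<in> S \<longleftrightarrow> (a \<in> S \<longrightarrow> b \<in> S)"
  using mcs_taut[OF S, of "[Imp a b, a]" b] mcs_taut[OF S, of "[b]" "Imp a b"]
    mcs_taut[OF S, of "[Neg a]" "Imp a b"] mcs_Neg[OF S, of a]
  by (auto simp: tautology_def)

lemma mcs_Box_Imps:
  assumes S: "mcs L S" and "Imps xs c \<in> L" "\<forall>x\<in>set xs. Box x \<in> S" shows "Box c \<in> S"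
  using mcs_Imps[OF S _ nml_Imps_Box[OF L assms(2)]] assms(3) by auto

lemma canon_Box_witness:
  assumes S: "mcs L S" and "Box a \<notin> S" shows "\<exists>U. canon_R L S U \<and> a \<notin> U"
proof -
  have "consistent L (insert (Neg a) {b. Box b \<in> S})"
    unfolding consistent_def
  proof (intro allI impI notI)
    fix xs assume xs: "set xs \<subseteq> insert (Neg a) {b. Box b \<in> S}" and "Imps xs Bot \<in> L"
    then have "Imps (filter (\<lambda>y. y \<noteq> Neg a) xs) a \<in> L"
      by (intro nml_taut_mp[OF L, of "[Imps xs Bot]"]) (auto simp: tautology_def)
    then have "Box a \<in> S" by (rule mcs_Box_Imps[OF S]) (use xs in auto)
    then show False using assms(2) by auto
  qed
  then obtain U where "insert (Neg a) {b. Box b \<in> S} \<subseteq> U" "mcs L U" using lindenbaum by blast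
  then show ?thesis using mcs_Neg[of U a] by (auto simp: canon_R_def)
qed

lemma canon_truth: "mcs L S \<Longrightarrow> sat (canon_R L) canon_V S a \<longleftrightarrow> a \<in> S"
proof (induction a arbitrary: S)
  case Bot then show ?case using mcs_Bot by auto
next
  case (Imp a b) then show ?case using mcs_Imp by auto
next
  case (Box a)
  have "Box a \<in> S" if "\<forall>U. canon_R L S U \<longrightarrow> sat (canon_R L) canon_V U a"
  proof (rule ccontr)
    assume "Box a \<notin> S"
    then obtain U where "canon_R L S U" "a \<notin> U" using canon_Box_witness[OF Box.prems] by blast
    then show False using that Box.IH by (auto simp: canon_R_def)
  qed
  moreover have "sat (canon_R L) canon_V U a" if "Box a \<in> S" "canon_R L S U" for U
  proof -
    have "mcs L U" "a \<in> U" using that by (auto simp: canon_R_def)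
    then show ?thesis using Box.IH by blast
  qed
  ultimately show ?case by auto
qed simp

lemma canon_closed: "closed {S. mcs L S} (canon_R L)"
  by (auto simp: closed_def canon_R_def)

lemma canon_countermodel:
  assumes "f \<notin> L" shows "\<exists>S. mcs L S \<and> \<not> sat (canon_R L) canon_V S f"
proof -
  have "consistent L {Neg f}"
    unfolding consistent_def
  proof (intro allI impI notI)
    fix xs assume "set xs \<subseteq> {Neg f}" "Imps xs Bot \<in> L"
    then have "f \<in> L" by (intro nml_taut_mp[OF L, of "[Imps xs Bot]"]) (auto simp: tautology_def)
    then show False using assms by auto
  qed
  then obtain S where "Neg f \<in> S" "mcs L S" using lindenbaum by blast
  then show ?thesis using canon_truth mcs_Neg by blast
qed

lemma canon_reflp: assumes "Imp (Box p) p \<in> L" shows "reflp_on {S. mcs L S} (canon_R L)"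
proof -
  have "a \<in> S" if "mcs L S" "Box a \<in> S" for S a
  proof -
    have "Imp (Box a) a \<in> L" using nml_subst[OF L assms, of "\<lambda>_. a"] by simp
    then show ?thesis using mcs_Imp mcs_logic that by blast
  qed
  then show ?thesis by (auto simp: reflp_on_def canon_R_def)
qed

lemma canon_transp:
  assumes "Imp (Box p) (Box (Box p)) \<in> L" shows "transp_on {S. mcs L S} (canon_R L)"
proof -
  have "Box (Box a) \<in> S" if "mcs L S" "Box a \<in> S" for S a
  proof -
    have "Imp (Box a) (Box (Box a)) \<in> L" using nml_subst[OF L assms, of "\<lambda>_. a"] by simp
    then show ?thesis using mcs_Imp mcs_logic that by blast
  qed
  then show ?thesis by (auto simp: transp_on_def canon_R_def)
qed

lemma canon_symp:
  assumes "Imp p (Box (Dia p)) \<in> L" shows "symp_on {S. mcs L S} (canon_R L)"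
  unfolding symp_on_def
proof (intro ballI impI)
  fix S U assume S: "S \<in> {S. mcs L S}" and U: "U \<in> {S. mcs L S}" and R: "canon_R L S U"
  have "a \<in> S" if "Box a \<in> U" for a
  proof (rule ccontr)
    assume "a \<notin> S"
    then have "Neg a \<in> S" using mcs_Neg S by auto
    moreover have "Imp (Neg a) (Box (Dia (Neg a))) \<in> L" using nml_subst[OF L assms, of "\<lambda>_. Neg a"] by simp
    ultimately have "Box (Dia (Neg a)) \<in> S" using mcs_Imp mcs_logic S by blast
    then have "Box (Neg (Neg a)) \<notin> U" using R mcs_Neg U by (auto simp: canon_R_def Dia_def)
    moreover have "Box (Neg (Neg a)) \<in> U"
      by (rule mcs_Box_Imps[of U "[a]"]) (use U that nml_taut[OF L] in \<open>auto simp: tautology_def\<close>)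
    ultimately show False by blast
  qed
  then show "canon_R L U S" using S by (auto simp: canon_R_def)
qed

lemma canon_confluent:
  assumes "Imp (Dia (Box p)) (Box (Dia p)) \<in> L" shows "confluent_on {S. mcs L S} (canon_R L)"
  unfolding confluent_on_def
proof (intro ballI impI)
  fix S U1 U2 assume S: "S \<in> {S. mcs L S}" and U1: "U1 \<in> {S. mcs L S}" and U2: "U2 \<in> {S. mcs L S}"
    and R1: "canon_R L S U1" and R2: "canon_R L S U2"
  \<comment> \<open>A common successor exists unless some c with \<box>c \<in> U1 has \<box>\<not>c \<in> U2; then
     \<diamond>\<box>c \<in> S, and the axiom gives \<box>\<diamond>c \<in> S, so \<diamond>c \<in> U2.\<close>
  have "consistent L ({a. Box a \<in> U1} \<union> {a. Box a \<in> U2})"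
    unfolding consistent_def
  proof (intro allI impI notI)
    fix xs assume xs: "set xs \<subseteq> {a. Box a \<in> U1} \<union> {a. Box a \<in> U2}" and d: "Imps xs Bot \<in> L"
    define ys where "ys = filter (\<lambda>x. Box x \<in> U1) xs"
    define zs where "zs = filter (\<lambda>x. Box x \<notin> U1) xs"
    define c where "c = foldr And ys Top"
    have "Box c \<in> U1"
      by (rule mcs_Box_Imps[of U1 ys])
         (use U1 nml_taut[OF L] in \<open>auto simp: tautology_def c_def ys_def peval_Conj\<close>)
    have "Imps zs (Neg c) \<in> L"
      by (rule nml_taut_mp[OF L, of "[Imps xs Bot]"])
         (use d in \<open>auto simp: tautology_def c_def ys_def zs_def peval_Conj\<close>)
    then have "Box (Neg c) \<in> U2" by (rule mcs_Box_Imps[rotated]) (use U2 xs in \<open>auto simp: zs_def\<close>)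
    moreover have "Dia (Box c) \<in> S"
    proof (rule ccontr)
      assume "Dia (Box c) \<notin> S"
      then have "Box (Neg (Box c)) \<in> S" using mcs_Neg S by (auto simp: Dia_def)
      then have "Neg (Box c) \<in> U1" using R1 by (auto simp: canon_R_def)
      then show False using mcs_Neg U1 \<open>Box c \<in> U1\<close> by auto
    qed
    moreover have "Imp (Dia (Box c)) (Box (Dia c)) \<in> L" using nml_subst[OF L assms, of "\<lambda>_. c"] by simp
    ultimately have "Box (Dia c) \<in> S" using mcs_Imp mcs_logic S by blast
    then have "Dia c \<in> U2" using R2 by (auto simp: canon_R_def)
    then show False using \<open>Box (Neg c) \<in> U2\<close> mcs_Neg U2 by (auto simp: Dia_def)
  qed
  then obtain X where "{a. Box a \<in> U1} \<union> {a. Box a \<in> U2} \<subseteq> X" "mcs L X" using lindenbaum by blast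
  then show "\<exists>w\<in>{S. mcs L S}. canon_R L U1 w \<and> canon_R L U2 w" by (auto simp: canon_R_def)
qed

lemma canon_connected:
  assumes "Or (Box (Imp (Box p) q)) (Box (Imp (Box q) p)) \<in> L"
  shows "connected_on {S. mcs L S} (canon_R L)"
  unfolding connected_on_def
proof (intro ballI impI)
  fix S U1 U2 assume S: "S \<in> {S. mcs L S}" and U1: "U1 \<in> {S. mcs L S}" and U2: "U2 \<in> {S. mcs L S}"
    and R1: "canon_R L S U1" and R2: "canon_R L S U2"
  show "canon_R L U1 U2 \<or> canon_R L U2 U1"
  proof (rule ccontr)
    assume "\<not> (canon_R L U1 U2 \<or> canon_R L U2 U1)"
    then obtain a b where a: "Box a \<in> U1" "a \<notin> U2" and b: "Box b \<in> U2" "b \<notin> U1"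
      using U1 U2 by (auto simp: canon_R_def)
    have "Or (Box (Imp (Box a) b)) (Box (Imp (Box b) a)) \<in> L"
      using nml_subst[OF L assms, of "\<lambda>n. if n = 0 then a else b"] by simp
    then have "Or (Box (Imp (Box a) b)) (Box (Imp (Box b) a)) \<in> S" using mcs_logic S by blast
    then have "Box (Imp (Box a) b) \<in> S \<or> Box (Imp (Box b) a) \<in> S"
      using mcs_Imp mcs_Neg S by (auto simp: Or_def)
    then show False using R1 R2 mcs_Imp U1 U2 a b by (auto simp: canon_R_def)
  qed
qed

end

section \<open>Doubling a frame\<close>

abbreviation doubled :: "('w \<Rightarrow> 'w \<Rightarrow> bool) \<Rightarrow> 'w \<times> bool \<Rightarrow> 'w \<times> bool \<Rightarrow> bool" where
  "doubled R u v \<equiv> R (fst u) (fst v)"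

abbreviation coloured :: "nat \<Rightarrow> (nat \<Rightarrow> 'w \<Rightarrow> bool) \<Rightarrow> nat \<Rightarrow> 'w \<times> bool \<Rightarrow> bool" where
  "coloured r V n u \<equiv> if n = r then snd u else V n (fst u)"

lemma closed_doubled: "closed W R \<Longrightarrow> closed (W \<times> UNIV) (doubled R)"
  unfolding closed_def Ball_def mem_Times_iff by blast
lemma reflp_on_doubled: "reflp_on W R \<Longrightarrow> reflp_on (W \<times> UNIV) (doubled R)"
  unfolding reflp_on_def Ball_def mem_Times_iff by blast
lemma symp_on_doubled: "symp_on W R \<Longrightarrow> symp_on (W \<times> UNIV) (doubled R)"
  unfolding symp_on_def Ball_def mem_Times_iff by blast
lemma transp_on_doubled: "transp_on W R \<Longrightarrow> transp_on (W \<times> UNIV) (doubled R)"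
  unfolding transp_on_def Ball_def mem_Times_iff by blast
lemma confluent_on_doubled: "confluent_on W R \<Longrightarrow> confluent_on (W \<times> UNIV) (doubled R)"
  by (simp add: confluent_on_def)
lemma connected_on_doubled: "connected_on W R \<Longrightarrow> connected_on (W \<times> UNIV) (doubled R)"
  unfolding connected_on_def Ball_def mem_Times_iff by blast

fun vars :: "fm \<Rightarrow> nat set" where
  "vars (Var n) = {n}"
| "vars Bot = {}"
| "vars (Imp a b) = vars a \<union> vars b"
| "vars (Box a) = vars a"

lemma finite_vars: "finite (vars a)"
  by (induction a) auto

lemma sat_doubled: "r \<notin> vars a \<Longrightarrow> sat (doubled R) (coloured r V) u a = sat R V (fst u) a"
proof (induction a arbitrary: u)
  case (Box a)
  then have "sat (doubled R) (coloured r V) u (Box a) =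
             (\<forall>v :: _ \<times> bool. R (fst u) (fst v) \<longrightarrow> sat R V (fst v) a)"
    by simp
  also have "\<dots> = (\<forall>y. R (fst u) y \<longrightarrow> sat R V y a)" by (metis fst_conv)
  also have "\<dots> = sat R V (fst u) (Box a)" by simp
  finally show ?case .
qed auto

lemma sat_doubled_guards:
  assumes "reflp_on W R" "fst u \<in> W"
  shows "r \<notin> vars a \<Longrightarrow> sat (doubled R) (coloured r V) u (guards r a)"
proof (induction a)
  case (Box b)
  \<comment> \<open>The twin (fst u, \<not> snd u) of u is a successor of the other colour that agrees with
     u on b.\<close>
  have "doubled R u (fst u, c)" for c using assms by (auto simp: reflp_on_def)
  then have "sat (doubled R) (coloured r V) u (twin_guard r b)"
    using sat_doubled[of r b R V] Box.prems by (auto simp: twin_guard_def)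
  then show ?case using Box by simp
qed auto

lemma sat_doubled_guards_within:
  assumes "reflp_on W R" "closed W R" "r \<notin> vars f"
  shows "fst u \<in> W \<Longrightarrow> sat (doubled R) (coloured r V) u (guards_within r f k)"
proof (induction k arbitrary: u)
  case 0 then show ?case using sat_doubled_guards[OF assms(1)] assms(3) by simp
next
  case (Suc k)
  have "fst v \<in> W" if "doubled R u v" for v using Suc.prems assms(2) that by (auto simp: closed_def)
  then show ?case using sat_doubled_guards[OF assms(1) Suc.prems] assms(3) Suc.IH by auto
qed

lemma strong_boxdot_if_valid_on_doubled_canonical:
  assumes L0: "nml L0"
    and refl: "reflp_on {S. mcs L0 S} (canon_R L0)"
    and valid: "L0 \<subseteq> {a. valid ({S. mcs L0 S} \<times> UNIV) (doubled (canon_R L0)) a}"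
  shows "strong_boxdot L0"
  unfolding strong_boxdot_def
proof (intro allI impI subsetI)
  fix L f assume L: "nml L" and BD: "BD L \<subseteq> L0" and f: "f \<in> L"
  show "f \<in> L0"
  proof (rule ccontr)
    assume "f \<notin> L0"
    then obtain S where S: "mcs L0 S" and "\<not> sat (canon_R L0) canon_V S f"
      using canon_countermodel[OF L0] by blast
    obtain r where r: "r \<notin> vars f" using ex_new_if_finite[OF infinite_UNIV_nat finite_vars] by auto
    have "\<not> sat (doubled (canon_R L0)) (coloured r canon_V) (S, True) f"
      using sat_doubled[OF r, of "canon_R L0" canon_V "(S, True)"] \<open>\<not> sat (canon_R L0) canon_V S f\<close>
      by (metis fst_conv)
    moreover have "sat (doubled (canon_R L0)) (coloured r canon_V) (S, True) (guards_within r f k)" for k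
      by (rule sat_doubled_guards_within[OF refl canon_closed[OF L0] r, where V = canon_V]) (simp add: S)
    ultimately have "\<not> valid ({S. mcs L0 S} \<times> UNIV) (doubled (canon_R L0)) (guarded r f)"
      using S unfolding valid_def guarded_def by auto
    moreover have "guarded r f \<in> L0" using guarded_in_BD[OF L f] BD by blast
    ultimately show False using valid by blast
  qed
qed

lemma nml_T: "nml T" unfolding T_def by (rule nml_ext)
lemma nml_KTB: "nml KTB" unfolding KTB_def by (rule nml_ext)
lemma nml_S4: "nml S4" unfolding S4_def by (rule nml_ext)
lemma nml_S5: "nml S5" unfolding S5_def by (rule nml_ext)
lemma nml_S4_2: "nml S4_2" unfolding S4_2_def by (rule nml_ext)
lemma nml_S4_3: "nml S4_3" unfolding S4_3_def by (rule nml_ext)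

lemma T_axiom: "Imp (Box p) p \<in> T" unfolding T_def by (rule ext_axiom)
lemma S4_axioms: "Imp (Box p) p \<in> S4" "Imp (Box p) (Box (Box p)) \<in> S4"
  unfolding S4_def using ext_subset T_axiom ext_axiom by blast+

lemma strong_boxdot_T: "strong_boxdot T"
  by (intro strong_boxdot_if_valid_on_doubled_canonical nml_T T_sound closed_doubled
      canon_closed reflp_on_doubled canon_reflp T_axiom)

lemma strong_boxdot_KTB: "strong_boxdot KTB"
proof -
  have "Imp (Box p) p \<in> KTB" "Imp p (Box (Dia p)) \<in> KTB"
    unfolding KTB_def using ext_subset T_axiom ext_axiom by blast+
  then show ?thesis
    by (intro strong_boxdot_if_valid_on_doubled_canonical nml_KTB KTB_sound closed_doubled
        canon_closed reflp_on_doubled symp_on_doubled canon_reflp canon_symp)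
qed

lemma strong_boxdot_S4: "strong_boxdot S4"
  by (intro strong_boxdot_if_valid_on_doubled_canonical nml_S4 S4_sound closed_doubled
      canon_closed reflp_on_doubled transp_on_doubled canon_reflp canon_transp S4_axioms)

lemma strong_boxdot_S5: "strong_boxdot S5"
proof -
  have "Imp (Box p) p \<in> S5" "Imp (Box p) (Box (Box p)) \<in> S5" "Imp p (Box (Dia p)) \<in> S5"
    unfolding S5_def using ext_subset S4_axioms ext_axiom by blast+
  then show ?thesis
    by (intro strong_boxdot_if_valid_on_doubled_canonical nml_S5 S5_sound closed_doubled
        canon_closed reflp_on_doubled transp_on_doubled symp_on_doubled
        canon_reflp canon_transp canon_symp)
qed

lemma strong_boxdot_S4_2: "strong_boxdot S4_2"
proof -
  have "Imp (Box p) p \<in> S4_2" "Imp (Box p) (Box (Box p)) \<in> S4_2"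
    "Imp (Dia (Box p)) (Box (Dia p)) \<in> S4_2"
    unfolding S4_2_def using ext_subset S4_axioms ext_axiom by blast+
  then show ?thesis
    by (intro strong_boxdot_if_valid_on_doubled_canonical nml_S4_2 S4_2_sound closed_doubled
        canon_closed reflp_on_doubled transp_on_doubled confluent_on_doubled
        canon_reflp canon_transp canon_confluent)
qed

lemma strong_boxdot_S4_3: "strong_boxdot S4_3"
proof -
  have "Imp (Box p) p \<in> S4_3" "Imp (Box p) (Box (Box p)) \<in> S4_3"
    "Or (Box (Imp (Box p) q)) (Box (Imp (Box q) p)) \<in> S4_3"
    unfolding S4_3_def using ext_subset S4_axioms ext_axiom by blast+
  then show ?thesis
    by (intro strong_boxdot_if_valid_on_doubled_canonical nml_S4_3 S4_3_sound closed_doubled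
        canon_closed reflp_on_doubled transp_on_doubled connected_on_doubled
        canon_reflp canon_transp canon_connected)
qed

theorem mainTheorem2:
  shows "(\<forall>L0 \<in> {T, KTB, S4, S5, S4_2, S4_3}. strong_boxdot L0)
         \<and> (\<forall>L. nml L \<longrightarrow> BD L = T \<longrightarrow> L \<subseteq> T)"
  using strong_boxdot_T strong_boxdot_KTB strong_boxdot_S4 strong_boxdot_S5
    strong_boxdot_S4_2 strong_boxdot_S4_3
  by (auto simp: strong_boxdot_def)

end
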